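(* Let $E$ be a semi-Montel space, $G\subset E'$ a linear subspace that determines boundedness, $\Omega\subset\mathbb{R}^d$ open and $k\in\mathbb{N}$. If $f\colon\Omega\to E$ is such that $e'\circ f\in\mathcal{C}^k(\Omega)$ for all $e'\in G$, then $f\in\mathcal{C}^k(\Omega,E)$.
   Context: $\mathbb{K}\in\{\mathbb{R},\mathbb{C}\}$. A semi-Montel space is a locally convex Hausdorff space over $\mathbb{K}$ in which every bounded set is relatively compact. $G\subset E'$ determines boundedness if every $\sigma(E,G)$-bounded subset of $E$ is bounded in $E$. $f\colon\Omega\to E$ is $\mathcal{C}^1$ if for each unit vector $e_n$ the limit $(\partial^{e_n})^Ef(x)=\lim_{h\to0,h\in\mathbb{R}\setminus\{0\}}(f(x+he_n)-f(x))/h$ exists in $E$ for all $x\in\Omega$ and is continuous in $x$; $\mathcal{C}^k$ is defined inductively (f is $\mathcal{C}^1$ and all first partial derivatives are $\mathcal{C}^{k-1}$). $\mathcal{C}^k(\Omega)$ is the scalar case. *)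

theory Defs
  imports "HOL-Analysis.Analysis"
begin

text \<open>Scalar field: a type 'k of class real_normed_field (covers K = real and K = complex).
  A locally convex Hausdorff space over 'k is presented by a vector space structure
  (scalar multiplication smul) together with a separating family of seminorms P i, i in I;
  its topology is the one generated by the seminorms.\<close>

definition seminorm_on :: "('k::real_normed_field \<Rightarrow> 'e::ab_group_add \<Rightarrow> 'e) \<Rightarrow> ('e \<Rightarrow> real) \<Rightarrow> bool" where
  "seminorm_on smul p \<longleftrightarrow>
     (\<forall>x y. p (x + y) \<le> p x + p y) \<and> (\<forall>c x. p (smul c x) = norm c * p x)"

definition seminorm_topology :: "'i set \<Rightarrow> ('i \<Rightarrow> 'e::ab_group_add \<Rightarrow> real) \<Rightarrow> 'e topology" where
  "seminorm_topology I P = topology (\<lambda>U. \<forall>x\<in>U. \<exists>F e. finite F \<and> F \<subseteq> I \<and> 0 < e \<and>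
        {y. \<forall>i\<in>F. P i (y - x) < e} \<subseteq> U)"

definition lc_hausdorff :: "('k::real_normed_field \<Rightarrow> 'e::ab_group_add \<Rightarrow> 'e) \<Rightarrow> ('i \<Rightarrow> 'e \<Rightarrow> real) \<Rightarrow> bool" where
  "lc_hausdorff smul P \<longleftrightarrow> Vector_Spaces.vector_space smul \<and> (\<forall>i. seminorm_on smul (P i))
     \<and> (\<forall>x. x \<noteq> 0 \<longrightarrow> (\<exists>i. P i x \<noteq> 0))"

definition vN_bounded :: "('k::real_normed_field \<Rightarrow> 'e::ab_group_add \<Rightarrow> 'e) \<Rightarrow> 'e topology \<Rightarrow> 'e set \<Rightarrow> bool" where
  "vN_bounded smul T B \<longleftrightarrow>
     (\<forall>U. openin T U \<and> 0 \<in> U \<longrightarrow> (\<exists>r>0. \<forall>c. r \<le> norm c \<longrightarrow> B \<subseteq> smul c ` U))"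

definition semi_montel :: "('k::real_normed_field \<Rightarrow> 'e::ab_group_add \<Rightarrow> 'e) \<Rightarrow> ('i \<Rightarrow> 'e \<Rightarrow> real) \<Rightarrow> bool" where
  "semi_montel smul P \<longleftrightarrow> lc_hausdorff smul P \<and>
     (\<forall>B. vN_bounded smul (seminorm_topology UNIV P) B \<longrightarrow>
          compactin (seminorm_topology UNIV P) ((seminorm_topology UNIV P) closure_of B))"

definition top_dual :: "('k::real_normed_field \<Rightarrow> 'e::ab_group_add \<Rightarrow> 'e) \<Rightarrow> ('i \<Rightarrow> 'e \<Rightarrow> real) \<Rightarrow> ('e \<Rightarrow> 'k) set" where
  "top_dual smul P = {e'. (\<forall>x y. e' (x + y) = e' x + e' y) \<and> (\<forall>c x. e' (smul c x) = c * e' x)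
       \<and> continuous_map (seminorm_topology UNIV P) euclidean e'}"

definition linear_subspace_fun :: "('e \<Rightarrow> 'k::real_normed_field) set \<Rightarrow> bool" where
  "linear_subspace_fun G \<longleftrightarrow> (\<lambda>x. 0) \<in> G \<and> (\<forall>g\<in>G. \<forall>h\<in>G. (\<lambda>x. g x + h x) \<in> G)
      \<and> (\<forall>c. \<forall>g\<in>G. (\<lambda>x. c * g x) \<in> G)"

definition weak_topology_G :: "('e \<Rightarrow> 'k::real_normed_field) set \<Rightarrow> 'e::ab_group_add topology" where
  "weak_topology_G G = seminorm_topology G (\<lambda>g x. norm (g x))"

definition determines_boundedness :: "('k::real_normed_field \<Rightarrow> 'e::ab_group_add \<Rightarrow> 'e) \<Rightarrow> ('i \<Rightarrow> 'e \<Rightarrow> real) \<Rightarrow> ('e \<Rightarrow> 'k) set \<Rightarrow> bool" where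
  "determines_boundedness smul P G \<longleftrightarrow>
     (\<forall>B. vN_bounded smul (weak_topology_G G) B \<longrightarrow> vN_bounded smul (seminorm_topology UNIV P) B)"

definition has_partial_in :: "'e topology \<Rightarrow> ('k::real_normed_field \<Rightarrow> 'e::ab_group_add \<Rightarrow> 'e) \<Rightarrow>
     ('a::euclidean_space \<Rightarrow> 'e) \<Rightarrow> 'a \<Rightarrow> 'a \<Rightarrow> 'e \<Rightarrow> bool" where
  "has_partial_in T smul f b x l \<longleftrightarrow>
     limitin T (\<lambda>h::real. smul (of_real (1 / h)) (f (x + h *\<^sub>R b) - f x)) l (at 0)"

definition partial_in :: "'e topology \<Rightarrow> ('k::real_normed_field \<Rightarrow> 'e::ab_group_add \<Rightarrow> 'e) \<Rightarrow>
     ('a::euclidean_space \<Rightarrow> 'e) \<Rightarrow> 'a \<Rightarrow> 'a \<Rightarrow> 'e" where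
  "partial_in T smul f b x = (SOME l. has_partial_in T smul f b x l)"

fun Ck_on :: "'e topology \<Rightarrow> ('k::real_normed_field \<Rightarrow> 'e::ab_group_add \<Rightarrow> 'e) \<Rightarrow>
     'a::euclidean_space set \<Rightarrow> nat \<Rightarrow> ('a \<Rightarrow> 'e) \<Rightarrow> bool" where
  "Ck_on T smul \<Omega> 0 f \<longleftrightarrow> continuous_map (top_of_set \<Omega>) T f"
| "Ck_on T smul \<Omega> (Suc k) f \<longleftrightarrow>
     (\<forall>b\<in>Basis. (\<forall>x\<in>\<Omega>. \<exists>l. has_partial_in T smul f b x l)
        \<and> Ck_on T smul \<Omega> k (partial_in T smul f b))"

abbreviation Ck_scalar :: "'a::euclidean_space set \<Rightarrow> nat \<Rightarrow> ('a \<Rightarrow> 'k::real_normed_field) \<Rightarrow> bool" where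
  "Ck_scalar \<Omega> k g \<equiv> Ck_on euclidean (*) \<Omega> k g"

end

theory Submission
  imports Defs
begin

text \<open>
  In a semi-Montel space E, a net that eventually lies in a \<open>\<sigma>(E,G)\<close>-bounded set and whose
  images under every \<open>e' \<in> G\<close> converge is itself convergent. Indeed the set is bounded, since
  G determines boundedness, so its closure is compact. Moreover G separates points: if \<open>e' x = 0\<close>
  for all \<open>e' \<in> G\<close>, the line through x is \<open>\<sigma>(E,G)\<close>-bounded, hence bounded, which forces every
  seminorm to vanish at x. All cluster points of the net have the same images under G, so there is
  exactly one cluster point in the compact closure, and the net converges to it.

  Applied to f near a point this gives continuity. Applied to the difference quotients of f, which
  are weakly bounded because every \<open>e' \<circ> f\<close> is differentiable along lines, it gives the partial
  derivatives, and \<open>e' \<circ> \<partial>f = \<partial>(e' \<circ> f)\<close>.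
\<close>

lemma compactin_cluster_point:
  assumes K: "compactin X K" and F: "F \<noteq> bot" and q: "eventually (\<lambda>t. q t \<in> K) F"
  obtains l where "l \<in> K" "\<And>A. eventually (\<lambda>t. t \<in> A) F \<Longrightarrow> l \<in> X closure_of (q ` A)"
proof -
  let ?C = "(\<lambda>A. X closure_of (q ` A)) ` {A. eventually (\<lambda>t. t \<in> A) F}"
  have "K \<inter> \<Inter>?C \<noteq> {}"
  proof (rule K[unfolded compactin_fip, THEN conjunct2, rule_format], intro conjI allI impI)
    show "\<forall>C\<in>?C. closedin X C" by auto
  next
    fix \<F> assume "finite \<F> \<and> \<F> \<subseteq> ?C"
    then obtain \<A> where \<A>: "finite \<A>" "\<A> \<subseteq> {A. eventually (\<lambda>t. t \<in> A) F}"
        "\<F> = (\<lambda>A. X closure_of (q ` A)) ` \<A>"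
      by (meson finite_subset_image)
    have "eventually (\<lambda>t. q t \<in> K \<and> (\<forall>A\<in>\<A>. t \<in> A)) F"
      using q \<A> by (intro eventually_conj eventually_ball_finite) auto
    then obtain t where t: "q t \<in> K" "\<forall>A\<in>\<A>. t \<in> A"
      using F eventually_happens' by blast
    with K have "q t \<in> topspace X" using compactin_subset_topspace by blast
    with t \<A>(3) have "q t \<in> \<Inter>\<F>"
      by (auto intro!: in_closure_of[THEN iffD2])
    with t show "K \<inter> \<Inter>\<F> \<noteq> {}" by blast
  qed
  with that show ?thesis by blast
qed

lemma cluster_point_continuous_value:
  fixes g :: "'a \<Rightarrow> 'b::metric_space"
  assumes cluster: "\<And>A. eventually (\<lambda>t. t \<in> A) F \<Longrightarrow> l \<in> X closure_of (q ` A)"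
    and g: "continuous_map X euclidean g" and lim: "((\<lambda>t. g (q t)) \<longlongrightarrow> L) F"
  shows "g l = L"
proof -
  have "dist (g l) L \<le> 0 + e" if "e > 0" for e
  proof -
    let ?A = "{t. g (q t) \<in> cball L e}"
    have "eventually (\<lambda>t. t \<in> ?A) F"
      using lim that unfolding tendsto_iff
      by (auto simp: dist_commute elim!: allE[of _ e] eventually_mono)
    then have "g l \<in> euclidean closure_of (g ` q ` ?A)"
      using cluster continuous_map_image_closure_subset[OF g] by blast
    also have "\<dots> \<subseteq> cball L e"
      by (simp add: closure_minimal image_subset_iff)
    finally show ?thesis by (simp add: dist_commute)
  qed
  then show ?thesis by (meson dist_le_zero_iff field_le_epsilon)
qed

lemma limitin_compactin_separating_family:
  fixes G :: "('a \<Rightarrow> 'b::metric_space) set"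
  assumes K: "compactin X K" and F: "F \<noteq> bot" and q: "eventually (\<lambda>t. q t \<in> K) F"
    and cont: "\<And>g. g \<in> G \<Longrightarrow> continuous_map X euclidean g"
    and lim: "\<And>g. g \<in> G \<Longrightarrow> ((\<lambda>t. g (q t)) \<longlongrightarrow> L g) F"
    and sep: "\<And>x y. x \<in> topspace X \<Longrightarrow> y \<in> topspace X \<Longrightarrow> (\<forall>g\<in>G. g x = g y) \<Longrightarrow> x = y"
  obtains l where "limitin X q l F" "\<forall>g\<in>G. g l = L g"
proof -
  obtain l where l: "l \<in> K" "\<And>A. eventually (\<lambda>t. t \<in> A) F \<Longrightarrow> l \<in> X closure_of (q ` A)"
    using compactin_cluster_point[OF K F q] by blast
  have gl: "\<forall>g\<in>G. g l = L g"
    using cluster_point_continuous_value[OF l(2)] cont lim by blast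
  have "eventually (\<lambda>t. q t \<in> V) F" if V: "openin X V" "l \<in> V" for V
  proof (rule ccontr)
    assume "\<not> eventually (\<lambda>t. q t \<in> V) F"
    \<comment> \<open>a cluster point of q along the part of F outside V is a second cluster point, hence l\<close>
    then have F': "inf F (principal {t. q t \<notin> V}) \<noteq> bot"
      by (simp add: trivial_limit_def eventually_inf_principal)
    have "eventually (\<lambda>t. q t \<in> K) (inf F (principal {t. q t \<notin> V}))"
      using q by (simp add: eventually_inf_principal eventually_mono)
    then obtain l' where l': "l' \<in> K"
      "\<And>A. eventually (\<lambda>t. t \<in> A) (inf F (principal {t. q t \<notin> V})) \<Longrightarrow> l' \<in> X closure_of (q ` A)"
      using compactin_cluster_point[OF K F'] by blast
    have "g l' = L g" if "g \<in> G" for g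
      by (rule cluster_point_continuous_value[OF l'(2) cont[OF that] tendsto_mono[OF inf_le1 lim[OF that]]])
    moreover have "l \<in> topspace X" "l' \<in> topspace X"
      using l(1) l'(1) compactin_subset_topspace[OF K] by auto
    ultimately have "l' = l"
      using gl sep by auto
    have "l' \<in> X closure_of (q ` {t. q t \<notin> V})"
      using l'(2) by (simp add: eventually_inf_principal)
    also have "\<dots> \<subseteq> topspace X - V"
      using V by (subst closure_of_restrict, intro closure_of_minimal) (auto simp: closedin_diff)
    finally show False using \<open>l' = l\<close> V by blast
  qed
  then have "limitin X q l F"
    using l(1) compactin_subset_topspace[OF K] by (auto simp: limitin_def)
  with gl that show ?thesis by blast
qed

lemma openin_seminorm_topology:
  "openin (seminorm_topology I P) U \<longleftrightarrow>
    (\<forall>x\<in>U. \<exists>F e. finite F \<and> F \<subseteq> I \<and> 0 < e \<and> {y. \<forall>i\<in>F. P i (y - x) < e} \<subseteq> U)"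
  (is "_ \<longleftrightarrow> ?open U")
proof -
  have "istopology ?open"
    unfolding istopology_def
  proof (intro conjI allI impI ballI)
    fix S T x
    assume "?open S" "?open T" "x \<in> S \<inter> T"
    then obtain F1 e1 F2 e2 where "finite F1" "F1 \<subseteq> I" "0 < e1" "{y. \<forall>i\<in>F1. P i (y - x) < e1} \<subseteq> S"
      "finite F2" "F2 \<subseteq> I" "0 < e2" "{y. \<forall>i\<in>F2. P i (y - x) < e2} \<subseteq> T"
      by (meson IntD1 IntD2)
    then show "\<exists>F e. finite F \<and> F \<subseteq> I \<and> 0 < e \<and> {y. \<forall>i\<in>F. P i (y - x) < e} \<subseteq> S \<inter> T"
      by (intro exI[of _ "F1 \<union> F2"] exI[of _ "min e1 e2"]) auto
  next
    fix \<K> x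
    assume "\<forall>S\<in>\<K>. ?open S" "x \<in> \<Union>\<K>"
    then show "\<exists>F e. finite F \<and> F \<subseteq> I \<and> 0 < e \<and> {y. \<forall>i\<in>F. P i (y - x) < e} \<subseteq> \<Union>\<K>"
      by (meson UnionE Union_upper order_trans)
  qed
  then show ?thesis
    by (simp add: seminorm_topology_def)
qed

lemma topspace_seminorm_topology [simp]: "topspace (seminorm_topology I P) = UNIV"
proof -
  have "openin (seminorm_topology I P) UNIV"
    unfolding openin_seminorm_topology by (meson finite.emptyI empty_subsetI subset_UNIV zero_less_one)
  then show ?thesis
    by (simp add: openin_subset subset_antisym)
qed

lemma
  assumes "module smul" and "seminorm_on smul p"
  shows seminorm_on_zero: "p 0 = 0"
    and seminorm_on_nonneg: "0 \<le> p x"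
proof -
  interpret module smul by fact
  have hom: "p (smul c x) = norm c * p x" and tri: "p (x + y) \<le> p x + p y" for c x y
    using assms(2) by (auto simp: seminorm_on_def)
  show "p 0 = 0"
    using hom[of 0 0] by simp
  have "p (x + - x) \<le> p x + p (- x)" by (rule tri)
  then show "0 \<le> p x"
    using hom[of "-1" x] \<open>p 0 = 0\<close> by simp
qed

lemma openin_seminorm_ball:
  assumes "seminorm_on smul (P i)" and "i \<in> I"
  shows "openin (seminorm_topology I P) {y. P i y < r}"
  unfolding openin_seminorm_topology
proof (intro ballI exI conjI)
  fix z assume z: "z \<in> {y. P i y < r}"
  show "finite {i}" "{i} \<subseteq> I" "0 < r - P i z"
    using z assms(2) by auto
  have "P i y \<le> P i (y - z) + P i z" for y
    using assms(1) unfolding seminorm_on_def by (metis diff_add_cancel)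
  then show "{y. \<forall>j\<in>{i}. P j (y - z) < r - P i z} \<subseteq> {y. P i y < r}"
    by (smt (verit) mem_Collect_eq singletonI subsetI)
qed

lemma lc_hausdorff_module: "lc_hausdorff smul P \<Longrightarrow> module smul"
  by (simp add: lc_hausdorff_def module_iff_vector_space)

lemma
  assumes "g \<in> top_dual smul P"
  shows top_dual_diff: "g (x - y) = g x - g y"
    and top_dual_scale: "g (smul c x) = c * g x"
    and top_dual_continuous: "continuous_map (seminorm_topology UNIV P) euclidean g"
proof -
  have "g (x - y + y) = g (x - y) + g y"
    using assms unfolding top_dual_def by blast
  then show "g (x - y) = g x - g y" by simp
qed (use assms in \<open>auto simp: top_dual_def\<close>)


lemma vN_bounded_weak_topology:
  fixes G :: "('e::ab_group_add \<Rightarrow> 'k::real_normed_field) set"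
  assumes "module smul"
    and hom: "\<And>g c x. g \<in> G \<Longrightarrow> g (smul c x) = c * g x"
    and bdd: "\<And>g. g \<in> G \<Longrightarrow> bounded (g ` B)"
  shows "vN_bounded smul (weak_topology_G G) B"
  unfolding vN_bounded_def
proof (intro allI impI)
  interpret module smul by fact
  fix U assume "openin (weak_topology_G G) U \<and> 0 \<in> U"
  then obtain F e where F: "finite F" "F \<subseteq> G" and "0 < e"
    and U: "{y. \<forall>g\<in>F. norm (g (y - 0)) < e} \<subseteq> U"
    unfolding weak_topology_G_def openin_seminorm_topology by meson
  have "\<forall>g\<in>G. \<exists>M>0. \<forall>y\<in>B. norm (g y) \<le> M"
    using bdd by (simp add: bounded_pos)
  then obtain M where M: "\<And>g y. g \<in> G \<Longrightarrow> y \<in> B \<Longrightarrow> norm (g y) \<le> M g"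
    and M_pos: "\<And>g. g \<in> G \<Longrightarrow> M g > 0"
    by metis
  define S where "S = (\<Sum>g\<in>F. M g)"
  have "S \<ge> 0"
    unfolding S_def using F M_pos by (meson less_imp_le subsetD sum_nonneg)
  show "\<exists>r>0. \<forall>c. r \<le> norm c \<longrightarrow> B \<subseteq> smul c ` U"
  proof (intro exI[of _ "S / e + 1"] conjI allI impI subsetI)
    show "0 < S / e + 1"
      using \<open>S \<ge> 0\<close> \<open>0 < e\<close> by (simp add: add_nonneg_pos)
    fix c :: 'k and y assume "S / e + 1 \<le> norm c" and y: "y \<in> B"
    then have "c \<noteq> 0" "S < e * norm c"
      using \<open>S \<ge> 0\<close> \<open>0 < e\<close> by (auto simp: field_simps)
    have "norm (g (smul (inverse c) y)) < e" if "g \<in> F" for g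
    proof -
      have "g (smul (inverse c) y) = inverse c * g y"
        using hom \<open>F \<subseteq> G\<close> that by blast
      then have "norm (g (smul (inverse c) y)) = norm (g y) / norm c"
        by (simp add: norm_mult norm_inverse divide_inverse mult.commute)
      also have "\<dots> \<le> S / norm c"
        unfolding S_def using M[of g y] y that F M_pos
        by (intro divide_right_mono order_trans[OF _ member_le_sum]) (auto intro: less_imp_le)
      also have "\<dots> < e"
        using \<open>S < e * norm c\<close> \<open>c \<noteq> 0\<close> by (simp add: divide_less_eq)
      finally show ?thesis .
    qed
    then have "smul (inverse c) y \<in> U"
      using U by auto
    moreover have "y = smul c (smul (inverse c) y)"
      using \<open>c \<noteq> 0\<close> by simp
    ultimately show "y \<in> smul c ` U" by blast
  qed
qed

lemma vN_bounded_line_imp_seminorm_zero: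
  assumes lc: "lc_hausdorff smul P"
    and bdd: "vN_bounded smul (seminorm_topology UNIV P) (range (\<lambda>c. smul c x))"
  shows "P i x = 0"
proof (rule ccontr)
  assume "P i x \<noteq> 0"
  interpret module smul using lc by (rule lc_hausdorff_module)
  have sn: "seminorm_on smul (P i)"
    using lc by (simp add: lc_hausdorff_def)
  then have "P i x > 0"
    using \<open>P i x \<noteq> 0\<close> seminorm_on_nonneg[OF module_axioms] by (simp add: order_less_le)
  have "openin (seminorm_topology UNIV P) {y. P i y < 1}" "0 \<in> {y. P i y < 1}"
    using openin_seminorm_ball[where P=P and i=i, OF sn] seminorm_on_zero[OF module_axioms sn] by auto
  then obtain r where "r > 0" and r: "range (\<lambda>c. smul c x) \<subseteq> smul (of_real r) ` {y. P i y < 1}"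
    using bdd unfolding vN_bounded_def by (metis abs_of_pos norm_of_real order_refl)
  \<comment> \<open>the multiple of x of seminorm exactly r would have to be r times a vector of seminorm < 1\<close>
  then obtain u where "P i u < 1" and u: "smul (of_real (r / P i x)) x = smul (of_real r) u"
    by blast
  have "r = P i (smul (of_real (r / P i x)) x)"
    using sn \<open>P i x > 0\<close> \<open>r > 0\<close> by (simp add: seminorm_on_def norm_divide)
  also have "\<dots> = r * P i u"
    using sn \<open>r > 0\<close> unfolding u by (simp add: seminorm_on_def)
  also have "\<dots> < r"
    using \<open>P i u < 1\<close> \<open>r > 0\<close> by simp
  finally show False by simp
qed

lemma determines_boundedness_separates:
  assumes lc: "lc_hausdorff smul P" and dual: "G \<subseteq> top_dual smul P"
    and det: "determines_boundedness smul P G" and eq: "\<forall>g\<in>G. g x = g y"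
  shows "x = y"
proof -
  have G0: "g (smul c (x - y)) = 0" if "g \<in> G" for g c
  proof -
    have "g \<in> top_dual smul P"
      using dual that by blast
    then show ?thesis
      using eq that by (simp add: top_dual_diff top_dual_scale)
  qed
  have "bounded (g ` range (\<lambda>c. smul c (x - y)))" if "g \<in> G" for g
  proof (rule bounded_subset[of "{0}"])
    show "g ` range (\<lambda>c. smul c (x - y)) \<subseteq> {0}"
      using G0[OF that] by auto
  qed simp
  then have "vN_bounded smul (weak_topology_G G) (range (\<lambda>c. smul c (x - y)))"
    using lc_hausdorff_module[OF lc] dual
    by (intro vN_bounded_weak_topology) (auto simp: top_dual_scale subsetD)
  then have "vN_bounded smul (seminorm_topology UNIV P) (range (\<lambda>c. smul c (x - y)))"
    using det by (simp add: determines_boundedness_def)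
  then have "\<forall>i. P i (x - y) = 0"
    using vN_bounded_line_imp_seminorm_zero[OF lc] by blast
  then show "x = y"
    using lc unfolding lc_hausdorff_def by (metis eq_iff_diff_eq_0)
qed

lemma atin_top_of_set_open:
  assumes "open S" and "x \<in> S"
  shows "atin (top_of_set S) x = at x"
proof (rule filter_eqI)
  fix Q
  have "eventually Q (atin (top_of_set S) x) \<longleftrightarrow> (\<exists>T. open T \<and> x \<in> T \<and> (\<forall>y\<in>T. y \<in> S \<and> y \<noteq> x \<longrightarrow> Q y))"
    using assms(2) by (simp add: atin_subtopology_within eventually_atin_within)
  also have "\<dots> \<longleftrightarrow> eventually Q (at x within S)"
    by (auto simp: eventually_at_topological)
  finally show "eventually Q (atin (top_of_set S) x) \<longleftrightarrow> eventually Q (at x)"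
    by (simp add: at_within_open[OF assms(2,1)])
qed

lemma open_line_preimage:
  fixes x b :: "'a::real_normed_vector"
  assumes "open S"
  shows "open {h::real. x + h *\<^sub>R b \<in> S}"
  using continuous_open_vimage[OF assms, of "\<lambda>h. x + h *\<^sub>R b"]
  by (simp add: vimage_def continuous_intros)

lemma has_partial_in_cong:
  assumes "open \<Omega>" and "x \<in> \<Omega>" and "\<And>y. y \<in> \<Omega> \<Longrightarrow> f y = f' y"
  shows "has_partial_in T smul f b x l \<longleftrightarrow> has_partial_in T smul f' b x l"
proof -
  have "eventually (\<lambda>h. h \<in> {h::real. x + h *\<^sub>R b \<in> \<Omega>}) (nhds 0)"
    using assms(1,2) by (intro eventually_nhds_in_open open_line_preimage) auto
  then have "eventually (\<lambda>h::real. smul (of_real (1 / h)) (f (x + h *\<^sub>R b) - f x)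
      = smul (of_real (1 / h)) (f' (x + h *\<^sub>R b) - f' x)) (at 0)" (is "eventually (\<lambda>h. ?q h = ?q' h) _")
    using assms(2,3) by (auto simp: eventually_at_filter elim: eventually_mono)
  moreover from this have "eventually (\<lambda>h. ?q' h = ?q h) (at 0)"
    by (rule eventually_mono) simp
  ultimately show ?thesis
    unfolding has_partial_in_def
    using limitin_transform_eventually[where f = ?q and g = ?q']
      limitin_transform_eventually[where f = ?q' and g = ?q] by blast
qed

lemma Ck_on_cong:
  fixes \<Omega> :: "'a::euclidean_space set"
  assumes "open \<Omega>" and "\<And>y. y \<in> \<Omega> \<Longrightarrow> f y = f' y" and "Ck_on T smul \<Omega> k f"
  shows "Ck_on T smul \<Omega> k f'"
  using assms(2,3)
proof (induction k arbitrary: f f')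
  case 0
  then show ?case
    by (auto intro: continuous_map_eq)
next
  case (Suc k)
  have same_partial: "has_partial_in T smul f b x l \<longleftrightarrow> has_partial_in T smul f' b x l"
    if "x \<in> \<Omega>" for b x l
    using has_partial_in_cong[OF assms(1) that] Suc.prems(1) by blast
  then have same_partial_in: "partial_in T smul f b y = partial_in T smul f' b y" if "y \<in> \<Omega>" for b y
    using that by (simp add: partial_in_def)
  show ?case
    unfolding Ck_on.simps
  proof (intro ballI, intro conjI)
    fix b :: 'a assume "b \<in> Basis"
    then have "\<forall>x\<in>\<Omega>. \<exists>l. has_partial_in T smul f b x l" "Ck_on T smul \<Omega> k (partial_in T smul f b)"
      using Suc.prems(2) by auto
    then show "\<forall>x\<in>\<Omega>. \<exists>l. has_partial_in T smul f' b x l" "Ck_on T smul \<Omega> k (partial_in T smul f' b)"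
      using same_partial Suc.IH[OF same_partial_in] by auto
  qed
qed

lemma partial_in_eqI:
  assumes "Hausdorff_space T" and "has_partial_in T smul f b x l"
  shows "partial_in T smul f b x = l"
  unfolding partial_in_def
proof (rule some_equality)
  show "has_partial_in T smul f b x l" by fact
  show "l' = l" if "has_partial_in T smul f b x l'" for l'
    using limitin_Hausdorff_unique[OF that[unfolded has_partial_in_def]
        assms(2)[unfolded has_partial_in_def] trivial_limit_at assms(1)] .
qed

lemma has_partial_in_top_dual:
  assumes "g \<in> top_dual smul P" and "has_partial_in (seminorm_topology UNIV P) smul f b x l"
  shows "has_partial_in euclidean (*) (g \<circ> f) b x (g l)"
  using continuous_map_limit[OF top_dual_continuous[OF assms(1)] assms(2)[unfolded has_partial_in_def]]
  by (simp add: has_partial_in_def o_def top_dual_diff[OF assms(1)] top_dual_scale[OF assms(1)])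

lemma isCont_if_difference_quotient:
  fixes \<phi> :: "real \<Rightarrow> 'k::real_normed_field"
  assumes "((\<lambda>t. of_real (1 / t) * (\<phi> (h + t) - \<phi> h)) \<longlongrightarrow> L) (at 0)"
  shows "isCont \<phi> h"
proof -
  have "((\<lambda>t. of_real t * (of_real (1 / t) * (\<phi> (h + t) - \<phi> h))) \<longlongrightarrow> of_real 0 * L) (at 0)"
    by (intro tendsto_mult tendsto_of_real assms tendsto_ident_at)
  moreover have "eventually (\<lambda>t. of_real t * (of_real (1 / t) * (\<phi> (h + t) - \<phi> h)) = \<phi> (h + t) - \<phi> h) (at 0)"
    by (auto simp: eventually_at_filter of_real_def)
  ultimately have "((\<lambda>t. \<phi> (h + t) - \<phi> h) \<longlongrightarrow> 0) (at 0)"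
    by (simp add: tendsto_cong)
  then show ?thesis
    by (simp add: isCont_def LIM_offset_zero_iff LIM_zero_iff)
qed

lemma bounded_difference_quotient:
  fixes \<phi> :: "real \<Rightarrow> 'k::real_normed_field"
  assumes cont: "continuous_on {-\<delta>..\<delta>} \<phi>"
    and lim: "((\<lambda>h. of_real (1 / h) * (\<phi> h - \<phi> 0)) \<longlongrightarrow> L) (at 0)"
  shows "bounded ((\<lambda>h. of_real (1 / h) * (\<phi> h - \<phi> 0)) ` ({-\<delta>..\<delta>} - {0}))"
proof -
  let ?q = "\<lambda>h. of_real (1 / h) * (\<phi> h - \<phi> 0)"
  have "eventually (\<lambda>h. norm (?q h) < norm L + 1) (at 0)"
    using tendsto_norm[OF lim] by (rule order_tendstoD) simp
  then obtain d where "d > 0" and near: "\<And>h. h \<noteq> 0 \<Longrightarrow> \<bar>h\<bar> < d \<Longrightarrow> norm (?q h) < norm L + 1"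
    by (auto simp: eventually_at dist_real_def)
  let ?K = "{-\<delta>..\<delta>} \<inter> {h. d \<le> \<bar>h\<bar>}"
  have "compact ?K"
    by (intro compact_Int_closed compact_Icc closed_Collect_le continuous_intros)
  moreover have "continuous_on ?K ?q"
    using \<open>d > 0\<close> by (intro continuous_intros continuous_on_subset[OF cont]) auto
  ultimately have "bounded (?q ` ?K)"
    by (intro compact_imp_bounded compact_continuous_image)
  moreover have "?q ` ({-\<delta>..\<delta>} - {0} - ?K) \<subseteq> cball 0 (norm L + 1)"
  proof (rule image_subsetI)
    fix h assume "h \<in> {-\<delta>..\<delta>} - {0} - ?K"
    then have "norm (?q h) < norm L + 1"
      by (intro near) auto
    then show "?q h \<in> cball 0 (norm L + 1)"
      by simp
  qed
  then have "bounded (?q ` ({-\<delta>..\<delta>} - {0} - ?K))"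
    using bounded_cball bounded_subset by blast
  ultimately have "bounded (?q ` ?K \<union> ?q ` ({-\<delta>..\<delta>} - {0} - ?K))"
    by simp
  then show ?thesis
    by (rule bounded_subset) auto
qed

lemma partial_in_top_dual:
  assumes "g \<in> top_dual smul P" and "\<exists>l. has_partial_in (seminorm_topology UNIV P) smul f b x l"
  shows "partial_in euclidean (*) (g \<circ> f) b x = g (partial_in (seminorm_topology UNIV P) smul f b x)"
proof -
  have "has_partial_in (seminorm_topology UNIV P) smul f b x (partial_in (seminorm_topology UNIV P) smul f b x)"
    unfolding partial_in_def using assms(2) by (rule someI_ex)
  then show ?thesis
    by (intro partial_in_eqI Hausdorff_space_euclidean has_partial_in_top_dual[OF assms(1)])
qed

locale semi_montel_determining =
  fixes smul :: "'k::real_normed_field \<Rightarrow> 'e::ab_group_add \<Rightarrow> 'e"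
    and P :: "'i \<Rightarrow> 'e \<Rightarrow> real"
    and G :: "('e \<Rightarrow> 'k) set"
  assumes semi_montel: "semi_montel smul P"
    and G_dual: "G \<subseteq> top_dual smul P"
    and determines: "determines_boundedness smul P G"
begin

lemma lc_hausdorff: "lc_hausdorff smul P"
  using semi_montel by (simp add: semi_montel_def)

lemma G_separates: "\<forall>g\<in>G. g x = g y \<Longrightarrow> x = y"
  using determines_boundedness_separates[OF lc_hausdorff G_dual determines] .

lemma limitin_if_weakly_convergent:
  assumes "F \<noteq> bot" and "eventually (\<lambda>t. q t \<in> B) F"
    and bdd: "\<And>g. g \<in> G \<Longrightarrow> bounded (g ` B)"
    and lim: "\<And>g. g \<in> G \<Longrightarrow> ((\<lambda>t. g (q t)) \<longlongrightarrow> L g) F"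
  obtains l where "limitin (seminorm_topology UNIV P) q l F" "\<forall>g\<in>G. g l = L g"
proof -
  let ?T = "seminorm_topology UNIV P"
  have "vN_bounded smul (weak_topology_G G) B"
    using lc_hausdorff_module[OF lc_hausdorff] G_dual bdd
    by (intro vN_bounded_weak_topology) (auto simp: top_dual_scale subsetD)
  then have K: "compactin ?T (?T closure_of B)"
    using determines semi_montel by (simp add: determines_boundedness_def semi_montel_def)
  have ev: "eventually (\<lambda>t. q t \<in> ?T closure_of B) F"
    using assms(2) closure_of_subset[of B ?T] by (auto elim: eventually_mono)
  have cont: "continuous_map ?T euclidean g" if "g \<in> G" for g
    using G_dual that by (blast intro: top_dual_continuous)
  obtain l where "limitin ?T q l F" "\<forall>g\<in>G. g l = L g"
    by (rule limitin_compactin_separating_family[where G = G and L = L and q = q, OF K assms(1) ev cont lim])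
      (auto intro: G_separates)
  with that show ?thesis .
qed

lemma continuous_map_if_weakly_continuous:
  fixes f :: "'a::euclidean_space \<Rightarrow> 'e"
  assumes "open \<Omega>" and cont: "\<And>g. g \<in> G \<Longrightarrow> continuous_on \<Omega> (g \<circ> f)"
  shows "continuous_map (top_of_set \<Omega>) (seminorm_topology UNIV P) f"
proof -
  have "limitin (seminorm_topology UNIV P) f (f x) (at x)" if "x \<in> \<Omega>" for x
  proof -
    obtain e where "e > 0" and e: "cball x e \<subseteq> \<Omega>"
      using open_contains_cball assms(1) \<open>x \<in> \<Omega>\<close> by blast
    have "eventually (\<lambda>y. y \<in> ball x e) (at x)"
      unfolding eventually_at using \<open>e > 0\<close> by (auto simp: dist_commute)
    then have ev: "eventually (\<lambda>y. f y \<in> f ` cball x e) (at x)"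
      by (auto elim: eventually_mono)
    have bdd: "bounded (g ` f ` cball x e)" if "g \<in> G" for g
      using compact_continuous_image[OF continuous_on_subset[OF cont[OF that] e] compact_cball]
      by (simp add: image_comp compact_imp_bounded)
    have lim: "((\<lambda>y. g (f y)) \<longlongrightarrow> g (f x)) (at x)" if "g \<in> G" for g
    proof -
      have "isCont (g \<circ> f) x"
        using cont[OF that] assms(1) \<open>x \<in> \<Omega>\<close> continuous_on_eq_continuous_at by blast
      then show ?thesis
        by (simp add: isCont_def o_def)
    qed
    obtain l where "limitin (seminorm_topology UNIV P) f l (at x)" "\<forall>g\<in>G. g l = g (f x)"
      by (rule limitin_if_weakly_convergent[where L = "\<lambda>g. g (f x)", OF at_neq_bot ev bdd lim])
    then show ?thesis
      using G_separates by force
  qed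
  then show ?thesis
    by (simp add: continuous_map_atin atin_top_of_set_open[OF assms(1)])
qed

lemma has_partial_in_if_weakly_partial:
  fixes f :: "'a::euclidean_space \<Rightarrow> 'e"
  assumes "open \<Omega>" and "x \<in> \<Omega>"
    and weak: "\<And>g y. g \<in> G \<Longrightarrow> y \<in> \<Omega> \<Longrightarrow> \<exists>L. has_partial_in euclidean (*) (g \<circ> f) b y L"
  shows "\<exists>l. has_partial_in (seminorm_topology UNIV P) smul f b x l"
proof -
  have "open {h::real. x + h *\<^sub>R b \<in> \<Omega>}" "0 \<in> {h::real. x + h *\<^sub>R b \<in> \<Omega>}"
    using assms(1,2) open_line_preimage by auto
  then obtain \<delta> where "\<delta> > 0" and line: "\<And>h. h \<in> {-\<delta>..\<delta>} \<Longrightarrow> x + h *\<^sub>R b \<in> \<Omega>"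
    by (metis (no_types, lifting) cball_eq_atLeastAtMost diff_0 add_0 mem_Collect_eq open_contains_cball subsetD)
  define q where "q h = smul (of_real (1 / h)) (f (x + h *\<^sub>R b) - f x)" for h :: real
  have gq: "g (q h) = of_real (1 / h) * (g (f (x + h *\<^sub>R b)) - g (f x))" if "g \<in> G" for g h
  proof -
    have "g \<in> top_dual smul P"
      using G_dual that by blast
    then show ?thesis
      by (simp add: q_def top_dual_diff top_dual_scale)
  qed
  obtain L where L: "\<And>g. g \<in> G \<Longrightarrow> has_partial_in euclidean (*) (g \<circ> f) b x (L g)"
    using weak[OF _ \<open>x \<in> \<Omega>\<close>] by metis
  have lim: "((\<lambda>h. g (q h)) \<longlongrightarrow> L g) (at 0)" if "g \<in> G" for g
    using L[OF that] by (simp add: has_partial_in_def gq[OF that])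
  have bdd: "bounded (g ` q ` ({-\<delta>..\<delta>} - {0}))" if "g \<in> G" for g
  proof -
    define \<phi> where "\<phi> h = g (f (x + h *\<^sub>R b))" for h
    have "isCont \<phi> h" if h: "h \<in> {-\<delta>..\<delta>}" for h
    proof -
      obtain L' where "has_partial_in euclidean (*) (g \<circ> f) b (x + h *\<^sub>R b) L'"
        using weak[OF \<open>g \<in> G\<close> line[OF h]] by blast
      then have "((\<lambda>t. of_real (1 / t) * (\<phi> (h + t) - \<phi> h)) \<longlongrightarrow> L') (at 0)"
        by (simp add: has_partial_in_def \<phi>_def scaleR_add_left add.assoc)
      then show ?thesis
        by (rule isCont_if_difference_quotient)
    qed
    then have "continuous_on {-\<delta>..\<delta>} \<phi>"
      by (rule continuous_at_imp_continuous_on[rule_format])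
    moreover have "((\<lambda>h. of_real (1 / h) * (\<phi> h - \<phi> 0)) \<longlongrightarrow> L g) (at 0)"
      using lim[OF that] by (simp add: gq[OF that] \<phi>_def)
    ultimately have "bounded ((\<lambda>h. of_real (1 / h) * (\<phi> h - \<phi> 0)) ` ({-\<delta>..\<delta>} - {0}))"
      by (rule bounded_difference_quotient)
    also have "(\<lambda>h. of_real (1 / h) * (\<phi> h - \<phi> 0)) ` ({-\<delta>..\<delta>} - {0}) = g ` q ` ({-\<delta>..\<delta>} - {0})"
      by (simp add: image_image gq[OF that] \<phi>_def)
    finally show ?thesis .
  qed
  have ev: "eventually (\<lambda>h. q h \<in> q ` ({-\<delta>..\<delta>} - {0})) (at 0)"
    unfolding eventually_at using \<open>\<delta> > 0\<close> by (intro exI[of _ \<delta>]) (auto intro!: imageI simp: abs_less_iff)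
  obtain l where "limitin (seminorm_topology UNIV P) q l (at 0)"
    by (rule limitin_if_weakly_convergent[where q = q and L = L, OF at_neq_bot ev bdd lim])
  then show ?thesis
    unfolding has_partial_in_def q_def by blast
qed

lemma Ck_on_if_weakly_Ck:
  fixes f :: "'a::euclidean_space \<Rightarrow> 'e"
  assumes "open \<Omega>" and "\<forall>g\<in>G. Ck_scalar \<Omega> k (g \<circ> f)"
  shows "Ck_on (seminorm_topology UNIV P) smul \<Omega> k f"
  using assms(2)
proof (induction k arbitrary: f)
  case 0
  then show ?case
    using continuous_map_if_weakly_continuous[OF assms(1)] by simp
next
  case (Suc k)
  show ?case
    unfolding Ck_on.simps
  proof (intro ballI, intro conjI)
    fix b :: 'a assume "b \<in> Basis"
    have weak: "(\<forall>y\<in>\<Omega>. \<exists>L. has_partial_in euclidean (*) (g \<circ> f) b y L)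
        \<and> Ck_scalar \<Omega> k (partial_in euclidean (*) (g \<circ> f) b)" if "g \<in> G" for g
      using Suc.prems that \<open>b \<in> Basis\<close> unfolding Ck_on.simps by blast
    show partial: "\<forall>x\<in>\<Omega>. \<exists>l. has_partial_in (seminorm_topology UNIV P) smul f b x l"
      using has_partial_in_if_weakly_partial[OF assms(1)] weak by blast
    have "Ck_scalar \<Omega> k (g \<circ> partial_in (seminorm_topology UNIV P) smul f b)" if "g \<in> G" for g
    proof (rule Ck_on_cong[OF assms(1) _ weak[OF that, THEN conjunct2]])
      fix y assume "y \<in> \<Omega>"
      then show "partial_in euclidean (*) (g \<circ> f) b y = (g \<circ> partial_in (seminorm_topology UNIV P) smul f b) y"
        using partial_in_top_dual[of g smul P f b y] G_dual partial that by auto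
    qed
    then show "Ck_on (seminorm_topology UNIV P) smul \<Omega> k (partial_in (seminorm_topology UNIV P) smul f b)"
      using Suc.IH by blast
  qed
qed

end

theorem mainTheorem12:
  fixes smul :: "'k::real_normed_field \<Rightarrow> 'e::ab_group_add \<Rightarrow> 'e"
    and P :: "'i \<Rightarrow> 'e \<Rightarrow> real"
    and G :: "('e \<Rightarrow> 'k) set"
    and \<Omega> :: "'a::euclidean_space set"
    and k :: nat
    and f :: "'a \<Rightarrow> 'e"
  assumes "semi_montel smul P"
    and "G \<subseteq> top_dual smul P"
    and "linear_subspace_fun G"
    and "determines_boundedness smul P G"
    and "open \<Omega>"
    and "\<forall>e'\<in>G. Ck_scalar \<Omega> k (e' \<circ> f)"
  shows "Ck_on (seminorm_topology UNIV P) smul \<Omega> k f"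
proof -
  interpret semi_montel_determining smul P G
    using assms(1,2,4) by unfold_locales
  show ?thesis
    using Ck_on_if_weakly_Ck assms(5,6) by blast
qed

end
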